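(* For every prime $p$ and every $k\ge 2$, $cw(\mathrm{Syl}_p(S_{p^k}))=1$. For every prime $p>2$ and every $k\ge 2$, $cw(\mathrm{Syl}_p(A_{p^k}))=1$.
   Context: $\mathrm{Syl}_p(G)$ denotes a Sylow $p$-subgroup of $G$; $S_n$ and $A_n$ are the symmetric and alternating groups. The commutator width $cw(G)$ is the maximum, over elements $g$ of the derived subgroup $G'$, of the least number of commutators whose product is $g$. *)

theory Defs
  imports "HOL-Algebra.Sym_Groups" "HOL-Algebra.Generated_Groups" "HOL-Computational_Algebra.Primes"
begin

text \<open>Commutator, with the same convention as the library's derived_set.\<close>
definition commutator :: "('a, 'b) monoid_scheme \<Rightarrow> 'a \<Rightarrow> 'a \<Rightarrow> 'a" where
  "commutator G x y = x \<otimes>\<^bsub>G\<^esub> y \<otimes>\<^bsub>G\<^esub> inv\<^bsub>G\<^esub> x \<otimes>\<^bsub>G\<^esub> inv\<^bsub>G\<^esub> y"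

definition comm_length :: "('a, 'b) monoid_scheme \<Rightarrow> 'a \<Rightarrow> nat" where
  "comm_length G g = (LEAST n. \<exists>xs ys. length xs = n \<and> length ys = n \<and>
      set xs \<subseteq> carrier G \<and> set ys \<subseteq> carrier G \<and>
      g = foldr (\<lambda>(x, y) acc. commutator G x y \<otimes>\<^bsub>G\<^esub> acc) (zip xs ys) \<one>\<^bsub>G\<^esub>)"

definition commutator_width :: "('a, 'b) monoid_scheme \<Rightarrow> nat" where
  "commutator_width G = Sup (comm_length G ` derived G (carrier G))"

definition is_sylow :: "nat \<Rightarrow> ('a, 'b) monoid_scheme \<Rightarrow> 'a set \<Rightarrow> bool" where
  "is_sylow p G P \<longleftrightarrow> subgroup P G \<and> card P = p ^ multiplicity p (order G)"

end

theory Submission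
  imports Defs "HOL-Algebra.Group_Action"
begin

text \<open>
  Up to conjugation, the Sylow \<open>p\<close>-subgroup of \<open>S\<^bsub>p^k\<^esub>\<close> is the iterated wreath product
  \<open>W\<^sub>k = W\<^bsub>k-1\<^esub> \<wr> C\<^sub>p\<close>, realised on \<open>{1..p^k}\<close> by splitting a point into its last base-\<open>p\<close>
  digit and the remaining block; its order \<open>p\<^bsup>1 + p + \<dots> + p^(k-1)\<^esup>\<close> is the \<open>p\<close>-part of \<open>(p^k)!\<close>. \<open>W\<^sub>k\<close> maps homomorphically to \<open>(\<int>/p)\<^sup>k\<close> (the top rotation,
  then recursively the sums over the \<open>p\<close> components), and by induction on \<open>k\<close> every element of
  the kernel is a single commutator: an element \<open>(0; g\<^sub>0, \<dots>, g\<^bsub>p-1\<^esub>)\<close> of the kernel is \<open>[A, B]\<close>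
  for \<open>A, B\<close> built from a commutator representation of \<open>g\<^bsub>p-1\<^esub> \<dots> g\<^sub>1 g\<^sub>0\<close> in \<open>W\<^bsub>k-1\<^esub>\<close>.
  So the set of commutators of \<open>W\<^sub>k\<close> is a subgroup, nontrivial for \<open>k \<ge> 2\<close>, and the commutator
  width is \<open>1\<close>. Sylow conjugacy transfers this to every Sylow subgroup, and for odd \<open>p\<close> a Sylow
  \<open>p\<close>-subgroup of \<open>A\<^bsub>p^k\<^esub>\<close> is one of \<open>S\<^bsub>p^k\<^esub>\<close>.
\<close>

section \<open>Commutator width\<close>

lemma derived_set_eq_commutators:
  "derived_set G H = {commutator G x y | x y. x \<in> H \<and> y \<in> H}"
  by (auto simp: commutator_def)

lemma (in group) inv_mult_cancel_left [simp]:
  "x \<in> carrier G \<Longrightarrow> y \<in> carrier G \<Longrightarrow> inv x \<otimes> (x \<otimes> y) = y"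
  by (simp add: m_assoc[symmetric])

lemma (in group) commutator_closed [simp]:
  "x \<in> carrier G \<Longrightarrow> y \<in> carrier G \<Longrightarrow> commutator G x y \<in> carrier G"
  by (simp add: commutator_def)

lemma (in group) commutator_eq_one_imp_commute:
  assumes "x \<in> carrier G" "y \<in> carrier G" "commutator G x y = \<one>"
  shows "x \<otimes> y = y \<otimes> x"
proof -
  have "x \<otimes> y = commutator G x y \<otimes> (y \<otimes> x)"
    using assms(1,2) by (simp add: commutator_def m_assoc)
  also have "\<dots> = y \<otimes> x" using assms by simp
  finally show ?thesis .
qed

lemma (in group) comm_length_commutator_le:
  assumes "x \<in> carrier G" "y \<in> carrier G"
  shows "comm_length G (commutator G x y) \<le> 1"
  unfolding comm_length_def
  using assms by (intro Least_le exI[of _ "[x]"] exI[of _ "[y]"]) simp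

lemma (in group) comm_length_commutator:
  assumes "x \<in> carrier G" "y \<in> carrier G" "commutator G x y \<noteq> \<one>"
  shows "comm_length G (commutator G x y) = 1"
  unfolding comm_length_def
proof (rule Least_equality)
  fix n assume "\<exists>xs ys. length xs = n \<and> length ys = n \<and> set xs \<subseteq> carrier G \<and> set ys \<subseteq> carrier G \<and>
      commutator G x y = foldr (\<lambda>(x, y) acc. commutator G x y \<otimes> acc) (zip xs ys) \<one>"
  with assms(3) show "1 \<le> n" by (cases n) auto
qed (use assms in \<open>intro exI[of _ "[x]"] exI[of _ "[y]"], simp\<close>)

lemma (in group) commutator_width_eq_1:
  assumes sub: "subgroup (derived_set G (carrier G)) G"
    and nontrivial: "derived_set G (carrier G) \<noteq> {\<one>}"
  shows "commutator_width G = 1"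
proof -
  have "derived G (carrier G) = derived_set G (carrier G)"
    unfolding derived_def by (rule generateI[OF sub, symmetric]) auto
  then have derived: "derived G (carrier G) = {commutator G x y | x y. x \<in> carrier G \<and> y \<in> carrier G}"
    by (simp add: derived_set_eq_commutators)
  obtain x y where xy: "x \<in> carrier G" "y \<in> carrier G" "commutator G x y \<noteq> \<one>"
    using nontrivial subgroup.one_closed[OF sub] unfolding derived_set_eq_commutators by blast
  show ?thesis
    unfolding commutator_width_def derived
  proof (rule cSup_eq_maximum)
    show "1 \<in> comm_length G ` {commutator G x y | x y. x \<in> carrier G \<and> y \<in> carrier G}"
      using comm_length_commutator[OF xy] xy by force
  qed (use comm_length_commutator_le in force)
qed

lemma (in group) commutator_width_subgroup_eq_1:
  assumes H: "subgroup H G" and sub: "subgroup (derived_set G H) G"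
    and nontrivial: "derived_set G H \<noteq> {\<one>}"
  shows "commutator_width (G\<lparr>carrier := H\<rparr>) = 1"
proof -
  interpret K: group "G\<lparr>carrier := H\<rparr>" by (rule subgroup_imp_group[OF H])
  have "derived_set (G\<lparr>carrier := H\<rparr>) H = derived_set G H"
    using H by (simp add: subgroup.mem_carrier)
  moreover have "derived_set G H \<subseteq> H" by (rule derived_set_incl[OF subset_refl H])
  ultimately show ?thesis
    using K.commutator_width_eq_1 subgroup_incl[OF sub H] nontrivial by simp
qed

lemma (in group) subgroup_conj:
  assumes "g \<in> carrier G" "subgroup H G"
  shows "subgroup ((\<lambda>x. g \<otimes> x \<otimes> inv g) ` H) G"
proof -
  have "(\<lambda>x. g \<otimes> x \<otimes> inv g) ` H = inv (inv g) <# H #> inv g"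
    using assms unfolding l_coset_def r_coset_def by auto
  with assms show ?thesis using subgroup_conjugation_is_surj1[of "inv g" H] by simp
qed

lemma (in group) commutator_conj:
  assumes "g \<in> carrier G" "x \<in> carrier G" "y \<in> carrier G"
  shows "commutator G (g \<otimes> x \<otimes> inv g) (g \<otimes> y \<otimes> inv g) = g \<otimes> commutator G x y \<otimes> inv g"
  using assms by (simp add: commutator_def inv_mult_group m_assoc)

lemma (in group) derived_set_conj:
  assumes "g \<in> carrier G" "H \<subseteq> carrier G"
  shows "derived_set G ((\<lambda>x. g \<otimes> x \<otimes> inv g) ` H) = (\<lambda>x. g \<otimes> x \<otimes> inv g) ` derived_set G H"
  unfolding derived_set_eq_commutators using assms commutator_conj[OF assms(1)]
  by (auto simp: image_iff subset_iff) metis+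

section \<open>Conjugacy of Sylow subgroups\<close>

lemma (in group_action) fixed_point_of_prime_power_order:
  assumes fin: "finite E" and p: "prime p" and order: "order G = p ^ a"
    and not_dvd: "\<not> p dvd card E"
  obtains x where "x \<in> E" "\<And>g. g \<in> carrier G \<Longrightarrow> \<phi> g x = x"
proof -
  have "\<exists>x\<in>E. card (orbit G \<phi> x) = 1"
  proof (rule ccontr)
    assume no_singleton: "\<not> ?thesis"
    have "p dvd card orb" if orb: "orb \<in> orbits G E \<phi>" for orb
    proof -
      obtain x where x: "x \<in> E" "orb = orbit G \<phi> x"
        using orb unfolding orbits_def by blast
      have "card orb dvd p ^ a"
        using orbit_stabilizer_theorem[OF x(1)] order x(2) by (metis dvd_triv_left)
      then obtain i where "card orb = p ^ i"
        using divides_primepow_nat[OF p] by blast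
      moreover have "i \<noteq> 0" using no_singleton x calculation by auto
      ultimately show ?thesis by simp
    qed
    then have "p dvd (\<Sum>orb\<in>orbits G E \<phi>. card orb)" by (rule dvd_sum)
    also have "(\<Sum>orb\<in>orbits G E \<phi>. card orb) = card E"
      using disjoint_sum[OF fin, of "\<lambda>_. 1 :: nat"] by simp
    finally show False using not_dvd by contradiction
  qed
  then obtain x where x: "x \<in> E" "card (orbit G \<phi> x) = 1" by blast
  have "\<phi> g x = x" if "g \<in> carrier G" for g
  proof -
    have "\<phi> g x \<in> orbit G \<phi> x" unfolding orbit_def using that by blast
    with x orbit_refl[OF x(1)] show ?thesis by (metis card_1_singletonE singletonD)
  qed
  with x(1) that show ?thesis by blast
qed

lemma (in group) rcosets_mult_closed:
  assumes "subgroup P G" "C \<in> rcosets P" "x \<in> carrier G"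
  shows "C #> x \<in> rcosets P"
proof -
  obtain y where y: "y \<in> carrier G" "C = P #> y" using assms(2) unfolding RCOSETS_def by auto
  then have "C #> x = P #> (y \<otimes> x)"
    using assms coset_mult_assoc subgroup.subset by blast
  with y assms(3) show ?thesis unfolding RCOSETS_def by auto
qed

text \<open>The right translation is taken by the inverse to obtain a left action.\<close>
lemma (in group) rcosets_action:
  assumes P: "subgroup P G" and Q: "subgroup Q G"
  shows "group_action (G\<lparr>carrier := Q\<rparr>) (rcosets P) (\<lambda>q. \<lambda>C \<in> rcosets P. C #> inv q)"
proof -
  let ?\<phi> = "\<lambda>q. \<lambda>C \<in> rcosets P. C #> inv q"
  have in_carrier: "q \<in> carrier G" if "q \<in> Q" for q using that subgroup.mem_carrier[OF Q] by blast
  have coset_subset: "C \<subseteq> carrier G" if "C \<in> rcosets P" for C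
    using that rcosets_part_G[OF P] by blast
  have bij: "?\<phi> q \<in> Bij (rcosets P)" if "q \<in> Q" for q
  proof -
    have "bij_betw (?\<phi> q) (rcosets P) (rcosets P)"
      by (rule bij_betw_byWitness[where f'="\<lambda>C. C #> q"])
        (use that in_carrier coset_subset rcosets_mult_closed[OF P] in \<open>auto simp: coset_mult_assoc\<close>)
    then show ?thesis unfolding Bij_def by simp
  qed
  have "?\<phi> \<in> hom (G\<lparr>carrier := Q\<rparr>) (BijGroup (rcosets P))"
  proof (rule homI)
    fix q1 q2 assume "q1 \<in> carrier (G\<lparr>carrier := Q\<rparr>)" "q2 \<in> carrier (G\<lparr>carrier := Q\<rparr>)"
    then have q: "q1 \<in> Q" "q2 \<in> Q" by auto
    have "?\<phi> (q1 \<otimes> q2) = compose (rcosets P) (?\<phi> q1) (?\<phi> q2)"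
      using q in_carrier rcosets_mult_closed[OF P] coset_subset
      by (intro ext) (auto simp: compose_def inv_mult_group coset_mult_assoc)
    then show "?\<phi> (q1 \<otimes>\<^bsub>G\<lparr>carrier := Q\<rparr>\<^esub> q2) = ?\<phi> q1 \<otimes>\<^bsub>BijGroup (rcosets P)\<^esub> ?\<phi> q2"
      using bij q by (simp add: BijGroup_def)
  qed (use bij in \<open>simp add: BijGroup_def\<close>)
  then show ?thesis
    unfolding group_action_def group_hom_def group_hom_axioms_def
    using subgroup_imp_group[OF Q] group_BijGroup by simp
qed

lemma (in group) fixed_rcoset_imp_conj_subset:
  assumes P: "subgroup P G" and Q: "subgroup Q G" and g: "g \<in> carrier G"
    and fixed: "\<And>q. q \<in> Q \<Longrightarrow> P #> g #> inv q = P #> g"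
  shows "(\<lambda>x. g \<otimes> x \<otimes> inv g) ` Q \<subseteq> P"
proof clarify
  fix q assume q: "q \<in> Q"
  have q_carrier: "q \<in> carrier G" using q subgroup.mem_carrier[OF Q] by blast
  have "P #> (g \<otimes> q) = P #> g"
    using fixed[OF subgroup.m_inv_closed[OF Q q]] g q_carrier coset_mult_assoc subgroup.subset[OF P]
    by simp
  then have "g \<otimes> q \<in> P #> g" using rcos_self[OF _ P] g q_carrier by (metis m_closed)
  then obtain h where h: "h \<in> P" "g \<otimes> q = h \<otimes> g" unfolding r_coset_def by auto
  then have "g \<otimes> q \<otimes> inv g = h" using g q_carrier subgroup.mem_carrier[OF P] by (simp add: m_assoc)
  with h show "g \<otimes> q \<otimes> inv g \<in> P" by simp
qed

lemma (in group) sylow_conjugate: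
  assumes fin: "finite (carrier G)" and p: "prime p"
    and P: "subgroup P G" "card P = p ^ multiplicity p (order G)"
    and Q: "subgroup Q G" "card Q = p ^ multiplicity p (order G)"
  obtains g where "g \<in> carrier G" "P = (\<lambda>x. g \<otimes> x \<otimes> inv g) ` Q"
proof -
  let ?a = "multiplicity p (order G)"
  interpret A: group_action "G\<lparr>carrier := Q\<rparr>" "rcosets P" "\<lambda>q. \<lambda>C \<in> rcosets P. C #> inv q"
    by (rule rcosets_action[OF P(1) Q(1)])
  have "card (rcosets P) * p ^ ?a = order G" using lagrange[OF P(1)] P(2) by simp
  then have "card (rcosets P) = order G div p ^ ?a"
    using p by (metis nonzero_mult_div_cancel_right power_not_zero not_prime_0)
  moreover have "order G \<noteq> 0" using fin order_gt_0_iff_finite by auto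
  moreover have "\<not> is_unit p" using prime_gt_1_nat[OF p] by simp
  ultimately have not_dvd: "\<not> p dvd card (rcosets P)" by (simp add: multiplicity_decompose)
  have "rcosets P \<subseteq> Pow (carrier G)" using rcosets_part_G[OF P(1)] by blast
  then have "finite (rcosets P)" using fin finite_subset by blast
  then obtain C where C: "C \<in> rcosets P" and fixed: "\<And>q. q \<in> Q \<Longrightarrow> C #> inv q = C"
    by (rule A.fixed_point_of_prime_power_order[OF _ p _ not_dvd])
      (auto simp: order_def Q(2))
  obtain g where g: "g \<in> carrier G" "C = P #> g" using C unfolding RCOSETS_def by auto
  have "finite P" using fin subgroup.subset[OF P(1)] finite_subset by blast
  moreover have "(\<lambda>x. g \<otimes> x \<otimes> inv g) ` Q \<subseteq> P"
    using fixed_rcoset_imp_conj_subset[OF P(1) Q(1) g(1)] fixed g(2) by blast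
  moreover have "card ((\<lambda>x. g \<otimes> x \<otimes> inv g) ` Q) = card P"
    using g subgroup.mem_carrier[OF Q(1)] P(2) Q(2)
    by (subst card_image) (auto intro: inj_onI)
  ultimately have "(\<lambda>x. g \<otimes> x \<otimes> inv g) ` Q = P" by (rule card_subset_eq)
  with g that show ?thesis by blast
qed

section \<open>Iterated wreath products of cyclic groups\<close>

text \<open>A point of \<open>{1..p * M}\<close> is written as a digit \<open>x < p\<close> together with a block \<open>w \<in> {1..M}\<close>.\<close>

definition point :: "nat \<Rightarrow> nat \<Rightarrow> nat \<Rightarrow> nat" where
  "point p x w = (w - 1) * p + x + 1"

definition digit :: "nat \<Rightarrow> nat \<Rightarrow> nat" where
  "digit p n = (n - 1) mod p"

definition block :: "nat \<Rightarrow> nat \<Rightarrow> nat" where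
  "block p n = (n - 1) div p + 1"

lemma digit_point [simp]: "x < p \<Longrightarrow> digit p (point p x w) = x"
  by (simp add: point_def digit_def)

lemma block_point [simp]: "x < p \<Longrightarrow> 1 \<le> w \<Longrightarrow> block p (point p x w) = w"
  by (simp add: point_def block_def)

lemma point_in_range:
  assumes "x < p" "w \<in> {1..M}"
  shows "point p x w \<in> {1..p * M}"
proof -
  have "(w - 1) * p + x + 1 \<le> (w - 1) * p + p" using assms(1) by simp
  also have "\<dots> = w * p" using assms(2) by (cases w) auto
  also have "\<dots> \<le> M * p" using assms(2) by simp
  finally show ?thesis by (simp add: point_def mult.commute)
qed

lemma point_cases:
  assumes "0 < p" "n \<in> {1..p * M}"
  obtains x w where "x < p" "w \<in> {1..M}" "n = point p x w"
proof
  show "digit p n < p" using assms(1) by (simp add: digit_def)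
  have "n - 1 < M * p" using assms(2) by (auto simp: mult.commute)
  then have "(n - 1) div p < M" by (rule less_mult_imp_div_less)
  then show "block p n \<in> {1..M}" by (simp add: block_def)
  show "n = point p (digit p n) (block p n)"
    using assms(2) by (simp add: point_def digit_def block_def mult.commute)
qed

text \<open>\<open>wr_perm p k t g\<close> is the element \<open>(t, g)\<close> of the wreath product of \<open>S\<^bsub>p^k\<^esub>\<close> by the
  cyclic group of order \<open>p\<close>: the point with digit \<open>x\<close> and block \<open>w\<close> goes to the point with digit
  \<open>x + t mod p\<close> and block \<open>g x w\<close>.\<close>

definition wr_perm :: "nat \<Rightarrow> nat \<Rightarrow> nat \<Rightarrow> (nat \<Rightarrow> nat \<Rightarrow> nat) \<Rightarrow> nat \<Rightarrow> nat" where
  "wr_perm p k t g n =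
    (if n \<in> {1..p ^ Suc k} then point p ((digit p n + t) mod p) (g (digit p n) (block p n)) else n)"

lemma wr_perm_point:
  assumes "x < p" "w \<in> {1..p ^ k}"
  shows "wr_perm p k t g (point p x w) = point p ((x + t) mod p) (g x w)"
  using point_in_range[OF assms] assms by (simp add: wr_perm_def)

lemma wr_perm_outside: "n \<notin> {1..p ^ Suc k} \<Longrightarrow> wr_perm p k t g n = n"
  unfolding wr_perm_def by auto

lemma wr_perm_unique:
  assumes p: "0 < p"
    and outside: "\<And>n. n \<notin> {1..p ^ Suc k} \<Longrightarrow> h n = n"
    and points: "\<And>x w. x < p \<Longrightarrow> w \<in> {1..p ^ k} \<Longrightarrow> h (point p x w) = point p ((x + t) mod p) (g x w)"
  shows "wr_perm p k t g = h"
proof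
  fix n show "wr_perm p k t g n = h n"
  proof (cases "n \<in> {1..p ^ Suc k}")
    case True
    then obtain x w where "x < p" "w \<in> {1..p ^ k}" "n = point p x w"
      using point_cases[OF p, of n "p ^ k"] by auto
    then show ?thesis by (simp add: wr_perm_point points)
  qed (simp add: wr_perm_outside outside)
qed

lemma wr_perm_cong:
  assumes p: "0 < p" and "t mod p = t' mod p" "\<And>a. a < p \<Longrightarrow> g a = g' a"
  shows "wr_perm p k t g = wr_perm p k t' g'"
proof (rule wr_perm_unique[OF p])
  fix x w assume "x < p" "w \<in> {1..p ^ k}"
  moreover have "(x + t') mod p = (x + t) mod p" using assms(2) by (metis mod_add_right_eq)
  ultimately show "wr_perm p k t' g' (point p x w) = point p ((x + t) mod p) (g x w)"
    using assms(3) by (simp add: wr_perm_point)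
qed (rule wr_perm_outside)

lemma wr_perm_id: "0 < p \<Longrightarrow> wr_perm p k 0 (\<lambda>_. id) = id"
  by (rule wr_perm_unique) auto

lemma wr_perm_comp:
  assumes p: "0 < p" and g': "\<And>a. a < p \<Longrightarrow> g' a ` {1..p ^ k} \<subseteq> {1..p ^ k}"
  shows "wr_perm p k t g \<circ> wr_perm p k t' g' =
         wr_perm p k ((t + t') mod p) (\<lambda>i. g ((i + t') mod p) \<circ> g' i)"
proof (rule sym, rule wr_perm_unique[OF p])
  fix x w assume xw: "x < p" "w \<in> {1..p ^ k}"
  then have "g' x w \<in> {1..p ^ k}" using g' by blast
  moreover have "((x + t') mod p + t) mod p = (x + (t + t') mod p) mod p"
    by (simp add: mod_add_left_eq mod_add_right_eq add.commute add.left_commute)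
  ultimately show "(wr_perm p k t g \<circ> wr_perm p k t' g') (point p x w) =
      point p ((x + (t + t') mod p) mod p) ((\<lambda>i. g ((i + t') mod p) \<circ> g' i) x w)"
    using xw p by (simp add: wr_perm_point)
qed (simp add: wr_perm_outside)

lemma wr_perm_inverse:
  assumes p: "0 < p" and t: "t < p" and g: "\<And>a. a < p \<Longrightarrow> g a permutes {1..p ^ k}"
  defines "t' \<equiv> (p - t) mod p"
  defines "g' \<equiv> \<lambda>i. inv' (g ((i + t') mod p))"
  shows "wr_perm p k t g \<circ> wr_perm p k t' g' = id" "wr_perm p k t' g' \<circ> wr_perm p k t g = id"
proof -
  have shift: "(t + t') mod p = 0" unfolding t'_def mod_add_right_eq using t by simp
  have shift_back: "((a + t) mod p + t') mod p = a" if "a < p" for a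
  proof -
    have "((a + t) mod p + t') mod p = (a + (t + t') mod p) mod p"
      by (simp add: mod_add_left_eq mod_add_right_eq add.assoc)
    with that shift show ?thesis by simp
  qed
  have g_image: "g a ` {1..p ^ k} \<subseteq> {1..p ^ k}" if "a < p" for a
    using g[OF that] by (simp add: permutes_image)
  have g'_image: "g' a ` {1..p ^ k} \<subseteq> {1..p ^ k}" if "a < p" for a
    unfolding g'_def using g[of "(a + t') mod p"] p by (simp add: permutes_inv permutes_image)
  have "wr_perm p k t g \<circ> wr_perm p k t' g' =
        wr_perm p k ((t + t') mod p) (\<lambda>i. g ((i + t') mod p) \<circ> g' i)"
    by (rule wr_perm_comp[OF p g'_image])
  also have "\<dots> = wr_perm p k 0 (\<lambda>_. id)"
  proof (rule wr_perm_cong[OF p])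
    fix a assume "a < p"
    then show "g ((a + t') mod p) \<circ> g' a = id"
      unfolding g'_def using g[of "(a + t') mod p"] p by (simp add: permutes_inv_o)
  qed (simp add: shift)
  finally show "wr_perm p k t g \<circ> wr_perm p k t' g' = id" using wr_perm_id[OF p] by simp
  have "wr_perm p k t' g' \<circ> wr_perm p k t g =
        wr_perm p k ((t' + t) mod p) (\<lambda>i. g' ((i + t) mod p) \<circ> g i)"
    by (rule wr_perm_comp[OF p g_image])
  also have "\<dots> = wr_perm p k 0 (\<lambda>_. id)"
  proof (rule wr_perm_cong[OF p])
    fix a assume "a < p"
    then show "g' ((a + t) mod p) \<circ> g a = id"
      unfolding g'_def using g[of a] shift_back by (simp add: permutes_inv_o)
  qed (simp add: shift add.commute)
  finally show "wr_perm p k t' g' \<circ> wr_perm p k t g = id" using wr_perm_id[OF p] by simp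
qed

lemma wr_perm_permutes:
  assumes "0 < p" "t < p" "\<And>a. a < p \<Longrightarrow> g a permutes {1..p ^ k}"
  shows "wr_perm p k t g permutes {1..p ^ Suc k}"
  unfolding permutes_def
proof
  show "\<forall>n. n \<notin> {1..p ^ Suc k} \<longrightarrow> wr_perm p k t g n = n" by (simp add: wr_perm_outside)
  have "bij (wr_perm p k t g)" using wr_perm_inverse[where g = g, OF assms] o_bij by blast
  then show "\<forall>n. \<exists>!m. wr_perm p k t g m = n" by (simp add: bij_iff)
qed

fun wreath_pow :: "nat \<Rightarrow> nat \<Rightarrow> (nat \<Rightarrow> nat) set" where
  "wreath_pow p 0 = {id}"
| "wreath_pow p (Suc k) = {wr_perm p k t g | t g. t < p \<and> (\<forall>a<p. g a \<in> wreath_pow p k)}"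

lemma wreath_pow_SucE:
  assumes "f \<in> wreath_pow p (Suc k)"
  obtains t g where "f = wr_perm p k t g" "t < p" "\<And>a. a < p \<Longrightarrow> g a \<in> wreath_pow p k"
  using assms by auto

lemma wr_perm_in_wreath_pow:
  "t < p \<Longrightarrow> (\<And>a. a < p \<Longrightarrow> g a \<in> wreath_pow p k) \<Longrightarrow> wr_perm p k t g \<in> wreath_pow p (Suc k)"
  by auto

lemma wreath_pow_permutes: "0 < p \<Longrightarrow> f \<in> wreath_pow p k \<Longrightarrow> f permutes {1..p ^ k}"
proof (induction k arbitrary: f)
  case 0 then show ?case by (simp add: permutes_id id_def)
next
  case (Suc k)
  then show ?case by (metis wreath_pow_SucE wr_perm_permutes)
qed

lemma id_in_wreath_pow: "0 < p \<Longrightarrow> id \<in> wreath_pow p k"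
proof (induction k)
  case (Suc k)
  have "wr_perm p k 0 (\<lambda>_. id) \<in> wreath_pow p (Suc k)"
    using Suc by (intro wr_perm_in_wreath_pow) blast+
  with Suc.prems show ?case by (metis wr_perm_id)
qed simp

lemma wr_perm_comp_wreath_pow:
  assumes "0 < p" "\<And>a. a < p \<Longrightarrow> g' a \<in> wreath_pow p k"
  shows "wr_perm p k t g \<circ> wr_perm p k t' g' =
         wr_perm p k ((t + t') mod p) (\<lambda>i. g ((i + t') mod p) \<circ> g' i)"
  using assms wreath_pow_permutes permutes_image by (intro wr_perm_comp) blast+

lemma wreath_pow_comp:
  "0 < p \<Longrightarrow> f \<in> wreath_pow p k \<Longrightarrow> h \<in> wreath_pow p k \<Longrightarrow> f \<circ> h \<in> wreath_pow p k"
proof (induction k arbitrary: f h)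
  case (Suc k)
  obtain t g where f: "f = wr_perm p k t g" "t < p" "\<And>a. a < p \<Longrightarrow> g a \<in> wreath_pow p k"
    using Suc.prems(2) by (blast elim: wreath_pow_SucE)
  obtain t' g' where h: "h = wr_perm p k t' g'" "t' < p" "\<And>a. a < p \<Longrightarrow> g' a \<in> wreath_pow p k"
    using Suc.prems(3) by (blast elim: wreath_pow_SucE)
  have "f \<circ> h = wr_perm p k ((t + t') mod p) (\<lambda>i. g ((i + t') mod p) \<circ> g' i)"
    unfolding f(1) h(1) by (rule wr_perm_comp_wreath_pow[OF Suc.prems(1) h(3)])
  moreover have "g ((i + t') mod p) \<circ> g' i \<in> wreath_pow p k" if "i < p" for i
    using Suc.prems(1) that by (intro Suc.IH f(3) h(3)) simp_all
  ultimately show ?case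
    using Suc.prems(1) wr_perm_in_wreath_pow[of "(t + t') mod p" p] by simp
qed simp

lemma wreath_pow_inv: "0 < p \<Longrightarrow> f \<in> wreath_pow p k \<Longrightarrow> inv' f \<in> wreath_pow p k"
proof (induction k arbitrary: f)
  case (Suc k)
  obtain t g where f: "f = wr_perm p k t g" "t < p" "\<And>a. a < p \<Longrightarrow> g a \<in> wreath_pow p k"
    using Suc.prems(2) by (blast elim: wreath_pow_SucE)
  define t' where "t' = (p - t) mod p"
  define g' where "g' = (\<lambda>i. inv' (g ((i + t') mod p)))"
  have "inv' f = wr_perm p k t' g'"
    using wr_perm_inverse[of p t g k] f Suc.prems(1) wreath_pow_permutes
    unfolding t'_def g'_def by (intro inv_unique_comp) auto
  moreover have "t' < p" "\<And>a. g' a \<in> wreath_pow p k"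
    using Suc f by (simp_all add: t'_def g'_def)
  ultimately show ?case using wr_perm_in_wreath_pow by metis
qed simp

lemma subgroup_wreath_pow:
  assumes "0 < p"
  shows "subgroup (wreath_pow p k) (sym_group (p ^ k))"
proof (rule subgroup.intro)
  show carrier: "wreath_pow p k \<subseteq> carrier (sym_group (p ^ k))"
    using wreath_pow_permutes[OF assms] by (auto simp: sym_group_carrier)
  show "x \<otimes>\<^bsub>sym_group (p ^ k)\<^esub> y \<in> wreath_pow p k" if "x \<in> wreath_pow p k" "y \<in> wreath_pow p k" for x y
    using that wreath_pow_comp[OF assms] by (simp add: sym_group_mult)
  show "\<one>\<^bsub>sym_group (p ^ k)\<^esub> \<in> wreath_pow p k"
    using id_in_wreath_pow[OF assms] by (simp add: sym_group_one)
  show "inv\<^bsub>sym_group (p ^ k)\<^esub> x \<in> wreath_pow p k" if "x \<in> wreath_pow p k" for x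
    using that carrier wreath_pow_inv[OF assms] by auto
qed

definition rotation :: "nat \<Rightarrow> (nat \<Rightarrow> nat) \<Rightarrow> nat" where
  "rotation p f = digit p (f 1)"

definition component :: "nat \<Rightarrow> nat \<Rightarrow> (nat \<Rightarrow> nat) \<Rightarrow> nat \<Rightarrow> nat \<Rightarrow> nat" where
  "component p k f a w = (if w \<in> {1..p ^ k} then block p (f (point p a w)) else w)"

lemma rotation_wr_perm: "0 < p \<Longrightarrow> rotation p (wr_perm p k t g) = t mod p"
  using wr_perm_point[of 0 p 1 k t g] by (simp add: rotation_def point_def digit_def)

lemma component_wr_perm:
  assumes "a < p" "g a permutes {1..p ^ k}"
  shows "component p k (wr_perm p k t g) a = g a"
proof
  fix w show "component p k (wr_perm p k t g) a w = g a w"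
  proof (cases "w \<in> {1..p ^ k}")
    case True
    moreover have "g a w \<in> {1..p ^ k}" using True permutes_in_image[OF assms(2)] by blast
    ultimately show ?thesis using assms(1) by (simp add: component_def wr_perm_point)
  qed (auto simp: component_def permutes_not_in[OF assms(2)])
qed

lemma wreath_pow_Suc_eq_image:
  assumes "0 < p"
  shows "wreath_pow p (Suc k) = (\<lambda>(t, g). wr_perm p k t g) ` ({..<p} \<times> (PiE {..<p} (\<lambda>_. wreath_pow p k)))"
proof (intro equalityI subsetI)
  fix f assume "f \<in> wreath_pow p (Suc k)"
  then obtain t g where f: "f = wr_perm p k t g" "t < p" "\<And>a. a < p \<Longrightarrow> g a \<in> wreath_pow p k"
    by (blast elim: wreath_pow_SucE)
  then have "f = wr_perm p k t (restrict g {..<p})" using assms by (simp add: wr_perm_cong)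
  with f show "f \<in> (\<lambda>(t, g). wr_perm p k t g) ` ({..<p} \<times> (PiE {..<p} (\<lambda>_. wreath_pow p k)))"
    by (intro image_eqI[of _ _ "(t, restrict g {..<p})"]) auto
qed auto

lemma inj_on_wr_perm:
  assumes "0 < p"
  shows "inj_on (\<lambda>(t, g). wr_perm p k t g) ({..<p} \<times> (PiE {..<p} (\<lambda>_. wreath_pow p k)))"
proof (rule inj_onI, clarsimp)
  fix t g t' g'
  assume t: "t < p" "t' < p" and g: "g \<in> PiE {..<p} (\<lambda>_. wreath_pow p k)" "g' \<in> PiE {..<p} (\<lambda>_. wreath_pow p k)"
    and eq: "wr_perm p k t g = wr_perm p k t' g'"
  show "t = t' \<and> g = g'"
  proof
    show "t = t'" using rotation_wr_perm[OF assms, of k] eq t by (metis mod_less)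
    show "g = g'"
    proof (rule PiE_ext[OF g])
      fix a assume "a \<in> {..<p}"
      then show "g a = g' a"
        using component_wr_perm eq g wreath_pow_permutes[OF assms] by (metis PiE_mem lessThan_iff)
    qed
  qed
qed

lemma card_wreath_pow: "0 < p \<Longrightarrow> card (wreath_pow p k) = p ^ (\<Sum>i<k. p ^ i)"
proof (induction k)
  case (Suc k)
  have "card (wreath_pow p (Suc k)) = card ({..<p} \<times> (PiE {..<p} (\<lambda>_. wreath_pow p k)))"
    unfolding wreath_pow_Suc_eq_image[OF Suc.prems] by (rule card_image[OF inj_on_wr_perm[OF Suc.prems]])
  also have "\<dots> = p * (p ^ (\<Sum>i<k. p ^ i)) ^ p"
    using Suc by (simp add: card_cartesian_product card_PiE)
  also have "\<dots> = p ^ (p * (\<Sum>i<k. p ^ i) + 1)"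
    by (simp add: power_mult[symmetric] mult.commute)
  also have "p * (\<Sum>i<k. p ^ i) + 1 = (\<Sum>i<Suc k. p ^ i)"
    unfolding sum.lessThan_Suc_shift by (simp add: sum_distrib_left)
  finally show ?case .
qed simp

lemma multiplicity_fact_mult_prime:
  assumes p: "prime (p :: nat)"
  shows "multiplicity p (fact (p * n)) = n + multiplicity p (fact n)"
proof (induction n)
  case (Suc n)
  have p_elem: "prime_elem p" using p by simp
  let ?block = "{p * n + 1..p * n + p}"
  have "fact (p * Suc n) = fact (p * n) * (\<Prod>?block :: nat)"
    using prod.ub_add_nat[of 1 "p * n" "\<lambda>i. i" p] by (simp add: fact_prod algebra_simps)
  then have "multiplicity p (fact (p * Suc n)) =
             multiplicity p (fact (p * n)) + (\<Sum>i\<in>?block. multiplicity p i)"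
    using p_elem by (simp add: prime_elem_multiplicity_mult_distrib prime_elem_multiplicity_prod_distrib)
  also have "(\<Sum>i\<in>?block. multiplicity p i) = multiplicity p (p * Suc n)"
  proof -
    have ndvd: "multiplicity p i = 0" if "i \<in> {p * n + 1..<p * n + p}" for i
    proof (rule not_dvd_imp_multiplicity_0)
      define r where "r = i - p * n"
      have r: "i = p * n + r" "0 < r" "r < p" using that by (auto simp: r_def)
      then have "p dvd i \<longleftrightarrow> p dvd r" by (simp add: dvd_add_right_iff)
      moreover have "\<not> p dvd r" using r(2,3) by (auto dest: dvd_imp_le)
      ultimately show "\<not> p dvd i" by blast
    qed
    have "?block = insert (p * Suc n) {p * n + 1..<p * n + p}" using prime_gt_0_nat[OF p] by auto
    with ndvd show ?thesis by simp
  qed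
  also have "multiplicity p (p * Suc n) = Suc (multiplicity p (Suc n))"
    using prime_elem_multiplicity_mult_distrib[OF p_elem, of p "Suc n"] p_elem p
    by (simp add: multiplicity_prime)
  finally have "multiplicity p (fact (p * Suc n)) = multiplicity p (fact (p * n)) + Suc (multiplicity p (Suc n))" .
  moreover have "multiplicity p (fact (Suc n)) = multiplicity p (Suc n) + multiplicity p (fact n)"
    unfolding fact_Suc of_nat_id by (rule prime_elem_multiplicity_mult_distrib[OF p_elem]) auto
  ultimately show ?case using Suc.IH by simp
qed simp

lemma multiplicity_fact_prime_power:
  "prime (p :: nat) \<Longrightarrow> multiplicity p (fact (p ^ k)) = (\<Sum>i<k. p ^ i)"
  by (induction k) (simp_all add: multiplicity_fact_mult_prime)

lemma is_sylow_wreath_pow: "prime p \<Longrightarrow> is_sylow p (sym_group (p ^ k)) (wreath_pow p k)"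
  using subgroup_wreath_pow card_wreath_pow multiplicity_fact_prime_power prime_gt_0_nat
  by (simp add: is_sylow_def order_def sym_group_card_carrier)

section \<open>Abelianization of the iterated wreath product\<close>

lemma sum_rotate_mod:
  assumes "0 < (p :: nat)"
  shows "(\<Sum>a<p. f ((a + t) mod p)) = (\<Sum>a<p. f a)"
proof -
  have inj: "inj_on (\<lambda>a. (a + t) mod p) {..<p}"
  proof (rule inj_onI)
    fix a b assume "a \<in> {..<p}" "b \<in> {..<p}" and eq: "(a + t) mod p = (b + t) mod p"
    have "(int a + int t) mod int p = (int b + int t) mod int p"
      using arg_cong[OF eq, of int] by (simp add: of_nat_mod)
    then have "(int a + int t + - int t) mod int p = (int b + int t + - int t) mod int p"
      by (rule mod_add_cong) simp
    then have "int (a mod p) = int (b mod p)" by (simp add: of_nat_mod)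
    with \<open>a \<in> {..<p}\<close> \<open>b \<in> {..<p}\<close> show "a = b" by simp
  qed
  moreover have "(\<lambda>a. (a + t) mod p) ` {..<p} = {..<p}"
    using assms inj by (intro endo_inj_surj) auto
  ultimately show ?thesis using sum.reindex[OF inj, of f] by simp
qed

text \<open>Coordinate \<open>j\<close> (a residue mod \<open>p\<close>, and \<open>0\<close> for \<open>j \<ge> k\<close>) of a homomorphism from
  \<open>wreath_pow p k\<close> to \<open>(\<int>/p)\<^sup>k\<close>: coordinate \<open>0\<close> is the top rotation, coordinate \<open>j + 1\<close> sums
  coordinate \<open>j\<close> over the \<open>p\<close> components. Its kernel turns out to be the set of commutators.\<close>

fun abel :: "nat \<Rightarrow> nat \<Rightarrow> (nat \<Rightarrow> nat) \<Rightarrow> nat \<Rightarrow> nat" where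
  "abel p 0 f j = 0"
| "abel p (Suc k) f 0 = rotation p f"
| "abel p (Suc k) f (Suc j) = (\<Sum>a<p. abel p k (component p k f a) j) mod p"

lemma abel_less: "0 < p \<Longrightarrow> abel p k f j < p"
  by (cases "(p, k, f, j)" rule: abel.cases) (simp_all add: rotation_def digit_def)

lemma abel_wr_perm_Suc:
  assumes "\<And>a. a < p \<Longrightarrow> g a \<in> wreath_pow p k"
  shows "abel p (Suc k) (wr_perm p k t g) (Suc j) = (\<Sum>a<p. abel p k (g a) j) mod p"
proof -
  have "component p k (wr_perm p k t g) a = g a" if "a < p" for a
    using that by (intro component_wr_perm wreath_pow_permutes assms) auto
  then show ?thesis by simp
qed

lemma abel_comp:
  assumes p: "0 < p"
  shows "f \<in> wreath_pow p k \<Longrightarrow> h \<in> wreath_pow p k \<Longrightarrow>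
         abel p k (f \<circ> h) j = (abel p k f j + abel p k h j) mod p"
proof (induction k arbitrary: f h j)
  case (Suc k)
  obtain t g where f: "f = wr_perm p k t g" "t < p" "\<And>a. a < p \<Longrightarrow> g a \<in> wreath_pow p k"
    using Suc.prems(1) by (blast elim: wreath_pow_SucE)
  obtain t' g' where h: "h = wr_perm p k t' g'" "t' < p" "\<And>a. a < p \<Longrightarrow> g' a \<in> wreath_pow p k"
    using Suc.prems(2) by (blast elim: wreath_pow_SucE)
  define H where "H = (\<lambda>i. g ((i + t') mod p) \<circ> g' i)"
  have fh: "f \<circ> h = wr_perm p k ((t + t') mod p) H"
    unfolding f(1) h(1) H_def by (rule wr_perm_comp_wreath_pow[OF p h(3)])
  have g_rot: "g ((i + t') mod p) \<in> wreath_pow p k" for i using p f(3) by simp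
  have H: "H a \<in> wreath_pow p k" if "a < p" for a
    unfolding H_def using wreath_pow_comp[OF p g_rot h(3)[OF that]] .
  show ?case
  proof (cases j)
    case 0
    have "abel p (Suc k) (f \<circ> h) 0 = (t + t') mod p" unfolding fh using p by (simp add: rotation_wr_perm)
    moreover have "abel p (Suc k) f 0 = t" "abel p (Suc k) h 0 = t'"
      using f(1,2) h(1,2) p by (simp_all add: rotation_wr_perm)
    ultimately show ?thesis using 0 by (simp only:)
  next
    case (Suc j')
    have "abel p (Suc k) (f \<circ> h) j = (\<Sum>a<p. abel p k (H a) j') mod p"
      unfolding fh Suc using H by (rule abel_wr_perm_Suc)
    also have "\<dots> = (\<Sum>a<p. (abel p k (g ((a + t') mod p)) j' + abel p k (g' a) j') mod p) mod p"
      unfolding H_def by (intro arg_cong[where f = "\<lambda>x. x mod p"] sum.cong refl Suc.IH g_rot h(3)) simp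
    also have "\<dots> = (\<Sum>a<p. abel p k (g ((a + t') mod p)) j' + abel p k (g' a) j') mod p"
      by (rule mod_sum_eq)
    also have "\<dots> = ((\<Sum>a<p. abel p k (g a) j') + (\<Sum>a<p. abel p k (g' a) j')) mod p"
      by (simp add: sum.distrib sum_rotate_mod[OF p, of "\<lambda>x. abel p k (g x) j'"])
    also have "\<dots> = (abel p (Suc k) f j + abel p (Suc k) h j) mod p"
      unfolding f(1) h(1) Suc by (simp only: abel_wr_perm_Suc[OF f(3)] abel_wr_perm_Suc[OF h(3)] mod_add_eq)
    finally show ?thesis .
  qed
qed simp

lemma abel_id:
  assumes "0 < p"
  shows "abel p k id j = 0"
proof -
  let ?s = "abel p k id j"
  have "?s = (?s + ?s) mod p"
    using abel_comp[OF assms, of id k id j] id_in_wreath_pow[OF assms, of k] by simp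
  moreover have "?s < p" by (rule abel_less[OF assms])
  ultimately show ?thesis by (cases "?s + ?s < p") (auto simp: le_mod_geq)
qed

lemma abel_inv:
  assumes "0 < p" "f \<in> wreath_pow p k"
  shows "(abel p k f j + abel p k (inv' f) j) mod p = 0"
proof -
  have "f \<circ> inv' f = id" using wreath_pow_permutes[OF assms] permutes_inv_o(1) by blast
  then show ?thesis
    using abel_comp[OF assms(1,2) wreath_pow_inv[OF assms], of j] abel_id[OF assms(1)] by simp
qed

definition abel_kernel :: "nat \<Rightarrow> nat \<Rightarrow> (nat \<Rightarrow> nat) set" where
  "abel_kernel p k = {f \<in> wreath_pow p k. \<forall>j. abel p k f j = 0}"

lemma subgroup_abel_kernel:
  assumes p: "0 < p"
  shows "subgroup (abel_kernel p k) (sym_group (p ^ k))"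
proof (rule subgroup.intro)
  have W: "subgroup (wreath_pow p k) (sym_group (p ^ k))" by (rule subgroup_wreath_pow[OF p])
  show "abel_kernel p k \<subseteq> carrier (sym_group (p ^ k))"
    using subgroup.subset[OF W] by (auto simp: abel_kernel_def)
  show "x \<otimes>\<^bsub>sym_group (p ^ k)\<^esub> y \<in> abel_kernel p k" if "x \<in> abel_kernel p k" "y \<in> abel_kernel p k" for x y
    using that wreath_pow_comp[OF p] abel_comp[OF p] by (simp add: sym_group_mult abel_kernel_def)
  show "\<one>\<^bsub>sym_group (p ^ k)\<^esub> \<in> abel_kernel p k"
    using id_in_wreath_pow[OF p] abel_id[OF p] by (simp add: sym_group_one abel_kernel_def)
  show "inv\<^bsub>sym_group (p ^ k)\<^esub> x \<in> abel_kernel p k" if x: "x \<in> abel_kernel p k" for x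
  proof -
    have "abel p k (inv' x) j = 0" for j
      using abel_inv[OF p, of x k j] abel_less[OF p, of k "inv' x" j] x by (simp add: abel_kernel_def)
    then show ?thesis
      using x wreath_pow_inv[OF p] subgroup.mem_carrier[OF W] by (simp add: abel_kernel_def)
  qed
qed

lemma commutator_in_abel_kernel:
  assumes p: "0 < p" and f: "f \<in> wreath_pow p k" and h: "h \<in> wreath_pow p k"
  shows "f \<circ> h \<circ> inv' f \<circ> inv' h \<in> abel_kernel p k"
proof -
  have f': "inv' f \<in> wreath_pow p k" and h': "inv' h \<in> wreath_pow p k"
    using wreath_pow_inv[OF p] f h by auto
  have fh: "f \<circ> h \<in> wreath_pow p k" and fhf: "f \<circ> h \<circ> inv' f \<in> wreath_pow p k"
    using wreath_pow_comp[OF p] f h f' by blast+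
  have "abel p k (f \<circ> h \<circ> inv' f \<circ> inv' h) j = 0" for j
  proof -
    let ?a = "abel p k f j" and ?a' = "abel p k (inv' f) j"
      and ?b = "abel p k h j" and ?b' = "abel p k (inv' h) j"
    have "abel p k (f \<circ> h \<circ> inv' f \<circ> inv' h) j = (((?a + ?b) mod p + ?a') mod p + ?b') mod p"
      by (simp only: abel_comp[OF p fhf h'] abel_comp[OF p fh f'] abel_comp[OF p f h])
    also have "\<dots> = ((?a + ?a') + (?b + ?b')) mod p"
      by (simp only: mod_add_left_eq) (simp add: add_ac)
    also have "\<dots> = ((?a + ?a') mod p + (?b + ?b') mod p) mod p"
      by (rule mod_add_eq[symmetric])
    also have "\<dots> = 0"
      using abel_inv[OF p f, of j] abel_inv[OF p h, of j] by simp
    finally show ?thesis .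
  qed
  then show ?thesis
    using wreath_pow_comp[OF p fhf h'] by (simp add: abel_kernel_def)
qed

primrec comp_upto :: "(nat \<Rightarrow> 'a \<Rightarrow> 'a) \<Rightarrow> nat \<Rightarrow> 'a \<Rightarrow> 'a" where
  "comp_upto g 0 = id"
| "comp_upto g (Suc i) = g (Suc i) \<circ> comp_upto g i"

lemma comp_upto_in_wreath_pow:
  assumes "0 < p" "\<And>a. a < p \<Longrightarrow> g a \<in> wreath_pow p k"
  shows "i < p \<Longrightarrow> comp_upto g i \<in> wreath_pow p k"
  by (induction i) (simp_all add: assms id_in_wreath_pow wreath_pow_comp)

lemma abel_comp_upto:
  assumes p: "0 < p" and g: "\<And>a. a < p \<Longrightarrow> g a \<in> wreath_pow p k"
  shows "i < p \<Longrightarrow> abel p k (comp_upto g i) j = (\<Sum>a\<in>{1..i}. abel p k (g a) j) mod p"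
proof (induction i)
  case (Suc i)
  have "abel p k (comp_upto g (Suc i)) j = (abel p k (g (Suc i)) j + abel p k (comp_upto g i) j) mod p"
    using abel_comp[OF p g comp_upto_in_wreath_pow[OF p g]] Suc.prems by simp
  also have "\<dots> = (abel p k (g (Suc i)) j + (\<Sum>a\<in>{1..i}. abel p k (g a) j)) mod p"
    using Suc by (simp add: mod_add_right_eq)
  also have "\<dots> = (\<Sum>a\<in>{1..Suc i}. abel p k (g a) j) mod p"
    by (simp add: add.commute)
  finally show ?case .
qed (simp add: abel_id[OF p])

lemma eq_commutator_if_comp_swap:
  assumes "bij A" "bij B" "A \<circ> B = f \<circ> (B \<circ> A)"
  shows "f = A \<circ> B \<circ> inv' A \<circ> inv' B"
proof
  fix z show "f z = (A \<circ> B \<circ> inv' A \<circ> inv' B) z"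
    using fun_cong[OF assms(3), of "inv' A (inv' B z)"] assms(1,2) by (simp add: bij_is_surj surj_f_inv_f)
qed

lemma wr_perm_comp_swap:
  assumes p: "1 < p" and \<alpha>: "\<And>i. i < p \<Longrightarrow> \<alpha> i \<in> wreath_pow p k" and \<beta>: "\<And>i. i < p \<Longrightarrow> \<beta> i \<in> wreath_pow p k"
    and twist: "\<And>i. i < p \<Longrightarrow> \<alpha> ((i + 1) mod p) \<circ> \<beta> i = g ((i + 1) mod p) \<circ> (\<beta> i \<circ> \<alpha> i)"
  shows "wr_perm p k 0 \<alpha> \<circ> wr_perm p k 1 \<beta> = wr_perm p k 0 g \<circ> (wr_perm p k 1 \<beta> \<circ> wr_perm p k 0 \<alpha>)"
proof -
  have p0: "0 < p" using p by simp
  have "wr_perm p k 0 \<alpha> \<circ> wr_perm p k 1 \<beta> = wr_perm p k 1 (\<lambda>i. \<alpha> ((i + 1) mod p) \<circ> \<beta> i)"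
    using wr_perm_comp_wreath_pow[OF p0 \<beta>] p by simp
  also have "\<dots> = wr_perm p k 1 (\<lambda>i. g ((i + 1) mod p) \<circ> (\<beta> i \<circ> \<alpha> i))"
    using twist by (rule wr_perm_cong[OF p0 refl])
  also have "\<dots> = wr_perm p k 0 g \<circ> wr_perm p k 1 (\<lambda>i. \<beta> i \<circ> \<alpha> i)"
    using wr_perm_comp_wreath_pow[OF p0, of "\<lambda>i. \<beta> i \<circ> \<alpha> i"] \<alpha> \<beta> wreath_pow_comp[OF p0] p
    by simp
  also have "wr_perm p k 1 (\<lambda>i. \<beta> i \<circ> \<alpha> i) = wr_perm p k 1 \<beta> \<circ> wr_perm p k 0 \<alpha>"
  proof -
    have "wr_perm p k 1 \<beta> \<circ> wr_perm p k 0 \<alpha> = wr_perm p k ((1 + 0) mod p) (\<lambda>i. \<beta> ((i + 0) mod p) \<circ> \<alpha> i)"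
      by (rule wr_perm_comp_wreath_pow[OF p0 \<alpha>])
    also have "\<dots> = wr_perm p k 1 (\<lambda>i. \<beta> i \<circ> \<alpha> i)"
      by (rule wr_perm_cong[OF p0]) simp_all
    finally show ?thesis by (rule sym)
  qed
  finally show ?thesis .
qed

text \<open>The witnesses: with \<open>P = g\<^bsub>p-1\<^esub> \<circ> \<dots> \<circ> g\<^bsub>1\<^esub>\<close> and \<open>P \<circ> g\<^bsub>0\<^esub> = [x, y]\<close>, take
  \<open>A = (0; i \<mapsto> g\<^bsub>i\<^esub> \<circ> \<dots> \<circ> g\<^bsub>1\<^esub> \<circ> P\<^sup>-\<^sup>1 \<circ> x)\<close> and \<open>B = (1; y at p - 1, identity elsewhere)\<close>;
  then \<open>A B = f B A\<close>.\<close>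

lemma wr_perm_eq_commutator:
  assumes p: "1 < p" and g: "\<And>a. a < p \<Longrightarrow> g a \<in> wreath_pow p k"
    and x: "x \<in> wreath_pow p k" and y: "y \<in> wreath_pow p k"
    and xy: "comp_upto g (p - 1) \<circ> g 0 = x \<circ> y \<circ> inv' x \<circ> inv' y"
  shows "\<exists>A\<in>wreath_pow p (Suc k). \<exists>B\<in>wreath_pow p (Suc k). wr_perm p k 0 g = A \<circ> B \<circ> inv' A \<circ> inv' B"
proof -
  have p0: "0 < p" using p by simp
  define P where "P = comp_upto g (p - 1)"
  have P: "P permutes {1..p ^ k}"
    unfolding P_def using wreath_pow_permutes[OF p0] comp_upto_in_wreath_pow[OF p0 g] p0 by simp
  have xp: "x permutes {1..p ^ k}" and yp: "y permutes {1..p ^ k}"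
    using wreath_pow_permutes[OF p0] x y by auto
  have key: "inv' P (x (y z)) = g 0 (y (x z))" for z
  proof -
    have "P (g 0 (y (x z))) = x (y (inv' x (inv' y (y (x z)))))"
      using fun_cong[OF xy, of "y (x z)"] by (simp add: P_def)
    also have "\<dots> = x (y z)" using xp yp by (simp add: permutes_inverses)
    finally show ?thesis using P by (metis permutes_inverses(2))
  qed
  define \<alpha> where "\<alpha> = (\<lambda>i. comp_upto g i \<circ> inv' P \<circ> x)"
  define \<beta> where "\<beta> = (\<lambda>i. if i = p - 1 then y else id)"
  have \<alpha>: "\<alpha> i \<in> wreath_pow p k" if "i < p" for i
    unfolding \<alpha>_def P_def using that p0 x g
    by (intro wreath_pow_comp wreath_pow_inv comp_upto_in_wreath_pow) auto
  have \<beta>: "\<beta> i \<in> wreath_pow p k" for i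
    using y id_in_wreath_pow[OF p0] by (simp add: \<beta>_def)
  have twist: "\<alpha> ((i + 1) mod p) \<circ> \<beta> i = g ((i + 1) mod p) \<circ> (\<beta> i \<circ> \<alpha> i)" if i: "i < p" for i
  proof (cases "i = p - 1")
    case True
    then have "(i + 1) mod p = 0" "comp_upto g i = P" using p0 by (simp_all add: P_def)
    then show ?thesis
      using True key P by (auto simp: \<alpha>_def \<beta>_def permutes_inverses)
  next
    case False
    then have "(i + 1) mod p = Suc i" using i by simp
    then show ?thesis using False by (simp add: \<alpha>_def \<beta>_def comp_assoc)
  qed
  define A where "A = wr_perm p k 0 \<alpha>"
  define B where "B = wr_perm p k 1 \<beta>"
  have A: "A \<in> wreath_pow p (Suc k)" unfolding A_def using \<alpha> p0 by (intro wr_perm_in_wreath_pow)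
  have B: "B \<in> wreath_pow p (Suc k)" unfolding B_def using \<beta> p by (intro wr_perm_in_wreath_pow)
  have "A \<circ> B = wr_perm p k 0 g \<circ> (B \<circ> A)"
    unfolding A_def B_def using p \<alpha> \<beta> twist by (rule wr_perm_comp_swap)
  then have "wr_perm p k 0 g = A \<circ> B \<circ> inv' A \<circ> inv' B"
    using wreath_pow_permutes[OF p0 A] wreath_pow_permutes[OF p0 B]
    by (intro eq_commutator_if_comp_swap) (auto dest: permutes_bij)
  with A B show ?thesis by blast
qed

lemma abel_kernel_imp_commutator:
  assumes p: "1 < p"
  shows "f \<in> abel_kernel p k \<Longrightarrow> \<exists>x\<in>wreath_pow p k. \<exists>y\<in>wreath_pow p k. f = x \<circ> y \<circ> inv' x \<circ> inv' y"
proof (induction k arbitrary: f)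
  case 0
  then have "f = id" by (simp add: abel_kernel_def)
  then show ?case by (intro bexI[of _ id]) auto
next
  case (Suc k)
  have p0: "0 < p" using p by simp
  have f_W: "f \<in> wreath_pow p (Suc k)" and f_abel: "\<And>j. abel p (Suc k) f j = 0"
    using Suc.prems by (auto simp: abel_kernel_def)
  obtain t g where f: "f = wr_perm p k t g" "t < p" and g: "\<And>a. a < p \<Longrightarrow> g a \<in> wreath_pow p k"
    using f_W by (blast elim: wreath_pow_SucE)
  have "t = 0" using f_abel[of 0] f p0 by (simp add: rotation_wr_perm)
  have sum_g: "(\<Sum>a<p. abel p k (g a) j) mod p = 0" for j
    using f_abel[of "Suc j"] by (simp only: f(1) abel_wr_perm_Suc[OF g])
  define P where "P = comp_upto g (p - 1)"
  have P: "P \<in> wreath_pow p k" unfolding P_def using comp_upto_in_wreath_pow[OF p0 g] p by simp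
  have "abel p k (P \<circ> g 0) j = 0" for j
  proof -
    have "abel p k (P \<circ> g 0) j = ((\<Sum>a\<in>{1..p - 1}. abel p k (g a) j) mod p + abel p k (g 0) j) mod p"
      unfolding P_def using abel_comp[OF p0 P[unfolded P_def] g[OF p0]] abel_comp_upto[OF p0 g] p
      by simp
    also have "\<dots> = ((\<Sum>a\<in>{1..p - 1}. abel p k (g a) j) + abel p k (g 0) j) mod p"
      by (simp add: mod_add_left_eq)
    also have "(\<Sum>a\<in>{1..p - 1}. abel p k (g a) j) + abel p k (g 0) j = (\<Sum>a<p. abel p k (g a) j)"
    proof -
      have "{..<p} = insert 0 {1..p - 1}" using p by auto
      then show ?thesis by simp
    qed
    finally show ?thesis using sum_g[of j] by (rule trans)
  qed
  then have "P \<circ> g 0 \<in> abel_kernel p k"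
    using wreath_pow_comp[OF p0 P g[OF p0]] by (simp add: abel_kernel_def)
  then obtain x y where "x \<in> wreath_pow p k" "y \<in> wreath_pow p k" "P \<circ> g 0 = x \<circ> y \<circ> inv' x \<circ> inv' y"
    using Suc.IH by blast
  then show ?case
    unfolding f(1) \<open>t = 0\<close> P_def by (intro wr_perm_eq_commutator[OF p g])
qed

lemma derived_set_wreath_pow:
  assumes p: "1 < p"
  shows "derived_set (sym_group (p ^ k)) (wreath_pow p k) = abel_kernel p k"
proof -
  have p0: "0 < p" using p by simp
  have commutator: "commutator (sym_group (p ^ k)) x y = x \<circ> y \<circ> inv' x \<circ> inv' y"
    if "x \<in> wreath_pow p k" "y \<in> wreath_pow p k" for x y
    using that wreath_pow_permutes[OF p0]
    by (simp add: commutator_def sym_group_mult sym_group_carrier)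
  show ?thesis
  proof (intro equalityI subsetI)
    fix c assume "c \<in> derived_set (sym_group (p ^ k)) (wreath_pow p k)"
    then obtain x y where "x \<in> wreath_pow p k" "y \<in> wreath_pow p k" "c = commutator (sym_group (p ^ k)) x y"
      unfolding derived_set_eq_commutators by blast
    then show "c \<in> abel_kernel p k" using commutator commutator_in_abel_kernel[OF p0] by simp
  next
    fix c assume "c \<in> abel_kernel p k"
    then obtain x y where xy: "x \<in> wreath_pow p k" "y \<in> wreath_pow p k" "c = x \<circ> y \<circ> inv' x \<circ> inv' y"
      using abel_kernel_imp_commutator[OF p] by blast
    then have "c = commutator (sym_group (p ^ k)) x y" using commutator by simp
    with xy(1,2) show "c \<in> derived_set (sym_group (p ^ k)) (wreath_pow p k)"
      unfolding derived_set_eq_commutators by blast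
  qed
qed

lemma wreath_pow_not_commutative:
  assumes p: "1 < p"
  obtains x y where "x \<in> wreath_pow p (Suc (Suc k))" "y \<in> wreath_pow p (Suc (Suc k))" "x \<circ> y \<noteq> y \<circ> x"
proof -
  have p0: "0 < p" using p by simp
  have one: "point p 0 1 = 1" by (simp add: point_def)
  have "p ^ 1 \<le> p ^ Suc k" using p by (intro power_increasing) auto
  then have "2 \<le> p ^ Suc k" using p by (simp only: power_one_right)
  then have two_in_range: "(2::nat) \<in> {1..p ^ Suc k}" by simp
  define h where "h = wr_perm p k 1 (\<lambda>_. id)"
  define x where "x = wr_perm p (Suc k) 0 (\<lambda>i. if i = 0 then h else id)"
  define y where "y = wr_perm p (Suc k) 1 (\<lambda>_. id)"
  have h: "h \<in> wreath_pow p (Suc k)"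
    unfolding h_def using p id_in_wreath_pow[OF p0] by (intro wr_perm_in_wreath_pow) blast+
  have "x \<in> wreath_pow p (Suc (Suc k))"
    unfolding x_def using p0 h id_in_wreath_pow[OF p0]
    by (intro wr_perm_in_wreath_pow) (auto simp del: wreath_pow.simps)
  moreover have "y \<in> wreath_pow p (Suc (Suc k))"
    unfolding y_def using p id_in_wreath_pow[OF p0] by (intro wr_perm_in_wreath_pow) blast+
  moreover have "(x \<circ> y) 1 \<noteq> (y \<circ> x) 1"
  proof -
    have "h 1 = 2" unfolding h_def using wr_perm_point[of 0 p 1 k 1 "\<lambda>_. id"] p one by (simp add: point_def)
    then have "(y \<circ> x) 1 = point p 1 2"
      unfolding x_def y_def using wr_perm_point[of 0 p 1 "Suc k"] wr_perm_point[of 0 p 2 "Suc k"] p one two_in_range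
      by simp
    moreover have "(x \<circ> y) 1 = point p 1 1"
      unfolding x_def y_def using wr_perm_point[of 0 p 1 "Suc k"] wr_perm_point[of 1 p 1 "Suc k"] p one
      by simp
    ultimately show ?thesis using p by (simp add: point_def)
  qed
  ultimately show ?thesis using that by metis
qed

section \<open>Sylow subgroups of symmetric and alternating groups\<close>

lemma (in group) commutator_width_conj_eq_1:
  assumes g: "g \<in> carrier G" and H: "subgroup H G" and sub: "subgroup (derived_set G H) G"
    and nontrivial: "derived_set G H \<noteq> {\<one>}"
  shows "commutator_width (G\<lparr>carrier := (\<lambda>x. g \<otimes> x \<otimes> inv g) ` H\<rparr>) = 1"
proof (rule commutator_width_subgroup_eq_1)
  have H_carrier: "H \<subseteq> carrier G" by (rule subgroup.subset[OF H])
  show "subgroup ((\<lambda>x. g \<otimes> x \<otimes> inv g) ` H) G" by (rule subgroup_conj[OF g H])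
  show "subgroup (derived_set G ((\<lambda>x. g \<otimes> x \<otimes> inv g) ` H)) G"
    unfolding derived_set_conj[OF g H_carrier] by (rule subgroup_conj[OF g sub])
  obtain c where c: "c \<in> derived_set G H" "c \<noteq> \<one>"
    using nontrivial subgroup.one_closed[OF sub] by blast
  then have "c \<in> carrier G" using subgroup.subset[OF sub] by blast
  with c g have "g \<otimes> c \<otimes> inv g \<noteq> \<one>" by (metis conjugation_is_inj one_closed r_one r_inv)
  with c(1) show "derived_set G ((\<lambda>x. g \<otimes> x \<otimes> inv g) ` H) \<noteq> {\<one>}"
    unfolding derived_set_conj[OF g H_carrier] by blast
qed

lemma commutator_width_sylow_sym_group:
  assumes p: "prime p" and k: "2 \<le> k" and P: "is_sylow p (sym_group (p ^ k)) P"
  shows "commutator_width (sym_group (p ^ k)\<lparr>carrier := P\<rparr>) = 1"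
proof -
  let ?S = "sym_group (p ^ k)"
  interpret S: group ?S by (rule sym_group_is_group)
  have p1: "1 < p" using p by (rule prime_gt_1_nat)
  have W: "is_sylow p ?S (wreath_pow p k)" by (rule is_sylow_wreath_pow[OF p])
  have "finite (carrier ?S)" by (simp add: sym_group_def finite_permutations)
  then obtain g where g: "g \<in> carrier ?S"
    and P_conj: "P = (\<lambda>x. g \<otimes>\<^bsub>?S\<^esub> x \<otimes>\<^bsub>?S\<^esub> inv\<^bsub>?S\<^esub> g) ` wreath_pow p k"
    using S.sylow_conjugate[OF _ p] P W unfolding is_sylow_def by metis
  obtain k' where k': "k = Suc (Suc k')" using k by (metis add_2_eq_Suc le_Suc_ex)
  obtain x y where xy: "x \<in> wreath_pow p k" "y \<in> wreath_pow p k" "x \<circ> y \<noteq> y \<circ> x"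
    using wreath_pow_not_commutative[OF p1] unfolding k' by blast
  have W_carrier: "wreath_pow p k \<subseteq> carrier ?S"
    using W subgroup.subset by (auto simp: is_sylow_def)
  with xy have "commutator ?S x y \<noteq> \<one>\<^bsub>?S\<^esub>"
    using S.commutator_eq_one_imp_commute by (auto simp: sym_group_mult)
  with xy(1,2) have "derived_set ?S (wreath_pow p k) \<noteq> {\<one>\<^bsub>?S\<^esub>}"
    unfolding derived_set_eq_commutators by blast
  then show ?thesis
    unfolding P_conj using W g subgroup_abel_kernel derived_set_wreath_pow[OF p1] p1
    by (intro S.commutator_width_conj_eq_1) (auto simp: is_sylow_def)
qed

lemma is_sylow_alt_group_imp_sym_group:
  assumes p: "prime p" "p \<noteq> 2" and n: "2 \<le> n" and P: "is_sylow p (alt_group n) P"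
  shows "is_sylow p (sym_group n) P"
proof -
  have "subgroup P (alt_group n)" using P by (simp add: is_sylow_def)
  then have "subgroup P (sym_group n)"
    using group.incl_subgroup[OF sym_group_is_group alt_group_is_subgroup] by (simp add: alt_group_def)
  moreover have "multiplicity p (order (sym_group n)) = multiplicity p (order (alt_group n))"
  proof -
    have order: "order (sym_group n) = 2 * order (alt_group n)"
      using alt_group_card_carrier[OF n] by (simp add: order_def sym_group_card_carrier)
    moreover have "order (alt_group n) \<noteq> 0"
      using order by (metis fact_nonzero mult_0_right order_def sym_group_card_carrier)
    moreover have "\<not> p dvd 2" using p prime_ge_2_nat[OF p(1)] by (auto dest: dvd_imp_le)
    ultimately show ?thesis using p by (simp add: prime_elem_multiplicity_mult_distrib not_dvd_imp_multiplicity_0)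
  qed
  ultimately show ?thesis using P by (simp add: is_sylow_def)
qed

theorem mainTheorem8:
  shows "(\<forall>(p::nat) k P. prime p \<and> k \<ge> 2 \<and> is_sylow p (sym_group (p ^ k)) P \<longrightarrow>
            commutator_width ((sym_group (p ^ k)) \<lparr>carrier := P\<rparr>) = 1)
       \<and> (\<forall>(p::nat) k P. prime p \<and> p > 2 \<and> k \<ge> 2 \<and> is_sylow p (alt_group (p ^ k)) P \<longrightarrow>
            commutator_width ((alt_group (p ^ k)) \<lparr>carrier := P\<rparr>) = 1)"
proof (intro conjI allI impI)
  fix p k P
  assume "prime (p::nat) \<and> k \<ge> 2 \<and> is_sylow p (sym_group (p ^ k)) P"
  then show "commutator_width ((sym_group (p ^ k)) \<lparr>carrier := P\<rparr>) = 1"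
    using commutator_width_sylow_sym_group by blast
next
  fix p k P
  assume asm: "prime (p::nat) \<and> p > 2 \<and> k \<ge> 2 \<and> is_sylow p (alt_group (p ^ k)) P"
  then have "2 \<le> p ^ k" using power_increasing[of 1 k p] by simp
  with asm have "is_sylow p (sym_group (p ^ k)) P"
    by (intro is_sylow_alt_group_imp_sym_group) auto
  with asm show "commutator_width ((alt_group (p ^ k)) \<lparr>carrier := P\<rparr>) = 1"
    using commutator_width_sylow_sym_group by (simp add: alt_group_def)
qed

end
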